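(* Let $\mathcal N$ be a network and $T\ge1$. For every $k\ge1$, every element of $\mathcal P_k^*$ is a path of length $k$ in $\mathcal G_k$.
   Context: A network is a triple $\mathcal N=(\mathcal L,\mathcal I,D_{\mathcal L})$ where $\mathcal L$ is a finite nonempty set of links, each $\mathcal I(l)$ is a collection of nonempty subsets of $\mathcal L$, and $D_{\mathcal L}$ assigns an integer $D_{\mathcal L}(l,l')$ to every pair with $l'\in\phi$ for some $\phi\in\mathcal I(l)$. A schedule is a map $S:\mathcal L\times\mathbb Z\to\{0,1\}$; $S(l,t)$ has a collision if there is $\phi\in\mathcal I(l)$ with $S(l',t+D_{\mathcal L}(l,l'))=1$ for all $l'\in\phi$; $S$ is collision free if no $(l,t)$ with $S(l,t)=1$ has a collision. $S[T,k]$ is the $|\mathcal L|\times T$ binary matrix with $S[T,k](l,j)=S(l,kT+j)$. The scheduling graph $(\mathcal M_T,\mathcal E_T)$ has vertex set $\mathcal M_T$ = all $|\mathcal L|\times T$ binary matrices $A$ with $A=S[T,0]$ for some collision-free $S$, and edge set $\mathcal E_T$ = all pairs $(A,B)$ with $A=S[T,0]$, $B=S[T,1]$ for some collision-free $S$. A path of length $k$ is a sequence $(A_0,\dots,A_k)$ with $(A_i,A_{i+1})\in\mathcal E_T$ for all $i$. Sequences of matrices of equal length are compared entrywise: $(A_0,\dots,A_k)\succcurlyeq(B_0,\dots,B_k)$ iff $A_i\succcurlyeq B_i$ entrywise for all $i$; $\succ$ means $\succcurlyeq$ and $\neq$. $\mathcal P_k^*$ is the set of paths of length $k$ in $(\mathcal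 M_T,\mathcal E_T)$ not strictly dominated ($\prec$) by any other path of length $k$. $\mathcal E^*$ is the set of maximal elements of $\mathcal E_T$ under this order on pairs; $\mathcal M_L^*=\{B:(B,B')\in\mathcal E^*\text{ for some }B'\}$, $\mathcal M_R^*=\{B:(B',B)\in\mathcal E^*\text{ for some }B'\}$. $A\wedge B$ is the entrywise AND of binary matrices, and $\mathcal V=\{B\wedge B': B\in\mathcal M_R^*, B'\in\mathcal M_L^*\}$. Define recursively $\mathcal U'_0=\mathcal E^*$ and, for $k\ge2$ (with $\mathcal U'_{k-2}$ already defined): $\mathcal F_k=\{(A,B\wedge B',C):(A,B)\in\mathcal U'_{k-2},(B',C)\in\mathcal E^*\}$; $\mathcal F_k^*=\{(A,B,C)\in\mathcal F_k:\text{there is no }(A,B',C)\in\mathcal F_k\text{ with }B'\succ B\}$; $\mathcal U_{k-2}=\{(A,B):(A,B,C)\in\mathcal F_k^*\text{ for some }C\}$; $\mathcal U'_{k-1}=\{(B,C):(A,B,C)\in\mathcal F_k^*\text{ for some }A\}$. A sequence $(P_0,\dots,P_k)$ is a path of length $k$ in $\mathcal G_k$ if: for $k=1$, $(P_0,P_1)\in\mathcal E^*$; for $k\ge2$, $P_0\in\mathcal M_L^*$, $P_1,\dots,P_{k-1}\in\mathcal V$, $P_k\in\mathcal M_R^*$, $(P_i,P_{i+1})\in\mathcal U_i$ for $0\le i\le k-2$, and $(P_{k-1},P_k)\in\mathcal U'_{k-1}$. *)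

theory Defs
  imports Main
begin

(* Links: the elements of a finite type 'l (L = UNIV, finite and automatically nonempty).
   Schedules: S :: 'l => int => bool  (True = 1, False = 0).
   A |L| x T binary matrix is represented as  'l => nat => bool  with all
   columns j >= T equal to False (columns are indexed 0..T-1). *)

type_synonym 'l mat = "'l \<Rightarrow> nat \<Rightarrow> bool"

definition network :: "('l::finite \<Rightarrow> 'l set set) \<Rightarrow> bool" where
  "network I \<longleftrightarrow> (\<forall>l. \<forall>\<phi>\<in>I l. \<phi> \<noteq> {})"

definition has_collision ::
  "('l \<Rightarrow> 'l set set) \<Rightarrow> ('l \<Rightarrow> 'l \<Rightarrow> int) \<Rightarrow> ('l \<Rightarrow> int \<Rightarrow> bool) \<Rightarrow> 'l \<Rightarrow> int \<Rightarrow> bool" where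
  "has_collision I D S l t \<longleftrightarrow> (\<exists>\<phi>\<in>I l. \<forall>l'\<in>\<phi>. S l' (t + D l l'))"

definition collision_free ::
  "('l \<Rightarrow> 'l set set) \<Rightarrow> ('l \<Rightarrow> 'l \<Rightarrow> int) \<Rightarrow> ('l \<Rightarrow> int \<Rightarrow> bool) \<Rightarrow> bool" where
  "collision_free I D S \<longleftrightarrow> (\<forall>l t. S l t \<longrightarrow> \<not> has_collision I D S l t)"

definition block :: "('l \<Rightarrow> int \<Rightarrow> bool) \<Rightarrow> nat \<Rightarrow> int \<Rightarrow> 'l mat" where
  "block S T k = (\<lambda>l j. j < T \<and> S l (k * int T + int j))"

definition MT :: "('l \<Rightarrow> 'l set set) \<Rightarrow> ('l \<Rightarrow> 'l \<Rightarrow> int) \<Rightarrow> nat \<Rightarrow> 'l mat set" where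
  "MT I D T = {A. \<exists>S. collision_free I D S \<and> A = block S T 0}"

definition ET :: "('l \<Rightarrow> 'l set set) \<Rightarrow> ('l \<Rightarrow> 'l \<Rightarrow> int) \<Rightarrow> nat \<Rightarrow> ('l mat \<times> 'l mat) set" where
  "ET I D T = {(A, B). \<exists>S. collision_free I D S \<and> A = block S T 0 \<and> B = block S T 1}"

definition mle :: "'l mat \<Rightarrow> 'l mat \<Rightarrow> bool" where
  "mle A B \<longleftrightarrow> (\<forall>l j. A l j \<longrightarrow> B l j)"

definition mless :: "'l mat \<Rightarrow> 'l mat \<Rightarrow> bool" where
  "mless A B \<longleftrightarrow> mle A B \<and> A \<noteq> B"

definition mand :: "'l mat \<Rightarrow> 'l mat \<Rightarrow> 'l mat" where
  "mand A B = (\<lambda>l j. A l j \<and> B l j)"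

definition seq_le :: "'l mat list \<Rightarrow> 'l mat list \<Rightarrow> bool" where
  "seq_le P Q \<longleftrightarrow> length P = length Q \<and> (\<forall>i < length P. mle (P ! i) (Q ! i))"

definition seq_less :: "'l mat list \<Rightarrow> 'l mat list \<Rightarrow> bool" where
  "seq_less P Q \<longleftrightarrow> seq_le P Q \<and> P \<noteq> Q"

definition is_path :: "('l mat \<times> 'l mat) set \<Rightarrow> nat \<Rightarrow> 'l mat list \<Rightarrow> bool" where
  "is_path E k P \<longleftrightarrow> length P = Suc k \<and> (\<forall>i < k. (P ! i, P ! Suc i) \<in> E)"

definition Pstar :: "('l \<Rightarrow> 'l set set) \<Rightarrow> ('l \<Rightarrow> 'l \<Rightarrow> int) \<Rightarrow> nat \<Rightarrow> nat \<Rightarrow> 'l mat list set" where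
  "Pstar I D T k = {P. is_path (ET I D T) k P \<and>
      \<not> (\<exists>Q. is_path (ET I D T) k Q \<and> seq_less P Q)}"

definition Estar :: "('l \<Rightarrow> 'l set set) \<Rightarrow> ('l \<Rightarrow> 'l \<Rightarrow> int) \<Rightarrow> nat \<Rightarrow> ('l mat \<times> 'l mat) set" where
  "Estar I D T = {(A, B). (A, B) \<in> ET I D T \<and>
      \<not> (\<exists>A' B'. (A', B') \<in> ET I D T \<and> seq_less [A, B] [A', B'])}"

definition Mleft_star :: "('l \<Rightarrow> 'l set set) \<Rightarrow> ('l \<Rightarrow> 'l \<Rightarrow> int) \<Rightarrow> nat \<Rightarrow> 'l mat set" where
  "Mleft_star I D T = {B. \<exists>B'. (B, B') \<in> Estar I D T}"

definition Mright_star :: "('l \<Rightarrow> 'l set set) \<Rightarrow> ('l \<Rightarrow> 'l \<Rightarrow> int) \<Rightarrow> nat \<Rightarrow> 'l mat set" where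
  "Mright_star I D T = {B. \<exists>B'. (B', B) \<in> Estar I D T}"

definition Vset :: "('l \<Rightarrow> 'l set set) \<Rightarrow> ('l \<Rightarrow> 'l \<Rightarrow> int) \<Rightarrow> nat \<Rightarrow> 'l mat set" where
  "Vset I D T = {mand B B' | B B'. B \<in> Mright_star I D T \<and> B' \<in> Mleft_star I D T}"

definition F_of :: "('l mat \<times> 'l mat) set \<Rightarrow> ('l mat \<times> 'l mat) set \<Rightarrow> ('l mat \<times> 'l mat \<times> 'l mat) set" where
  "F_of Es U = {(A, mand B B', C) | A B B' C. (A, B) \<in> U \<and> (B', C) \<in> Es}"

definition Fstar_of :: "('l mat \<times> 'l mat) set \<Rightarrow> ('l mat \<times> 'l mat) set \<Rightarrow> ('l mat \<times> 'l mat \<times> 'l mat) set" where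
  "Fstar_of Es U = {(A, B, C). (A, B, C) \<in> F_of Es U \<and>
      \<not> (\<exists>B'. (A, B', C) \<in> F_of Es U \<and> mless B B')}"

(* Uprime I D T n = U'_n ;  F_{n+2} = F_of E^* U'_n *)
fun Uprime :: "('l \<Rightarrow> 'l set set) \<Rightarrow> ('l \<Rightarrow> 'l \<Rightarrow> int) \<Rightarrow> nat \<Rightarrow> nat \<Rightarrow> ('l mat \<times> 'l mat) set" where
  "Uprime I D T 0 = Estar I D T"
| "Uprime I D T (Suc n) = {(B, C). \<exists>A. (A, B, C) \<in> Fstar_of (Estar I D T) (Uprime I D T n)}"

(* Uset I D T n = U_n, obtained from F^*_{n+2} *)
definition Uset :: "('l \<Rightarrow> 'l set set) \<Rightarrow> ('l \<Rightarrow> 'l \<Rightarrow> int) \<Rightarrow> nat \<Rightarrow> nat \<Rightarrow> ('l mat \<times> 'l mat) set" where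
  "Uset I D T n = {(A, B). \<exists>C. (A, B, C) \<in> Fstar_of (Estar I D T) (Uprime I D T n)}"

definition path_Gk :: "('l \<Rightarrow> 'l set set) \<Rightarrow> ('l \<Rightarrow> 'l \<Rightarrow> int) \<Rightarrow> nat \<Rightarrow> nat \<Rightarrow> 'l mat list \<Rightarrow> bool" where
  "path_Gk I D T k P \<longleftrightarrow> length P = Suc k \<and>
    (if k = 1 then (P ! 0, P ! 1) \<in> Estar I D T
     else 2 \<le> k \<and>
       P ! 0 \<in> Mleft_star I D T \<and>
       (\<forall>i. 1 \<le> i \<and> i \<le> k - 1 \<longrightarrow> P ! i \<in> Vset I D T) \<and>
       P ! k \<in> Mright_star I D T \<and>
       (\<forall>i. i \<le> k - 2 \<longrightarrow> (P ! i, P ! Suc i) \<in> Uset I D T i) \<and>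
       (P ! (k - 1), P ! k) \<in> Uprime I D T (k - 1))"

end

theory Submission
  imports Defs "HOL-Library.Product_Order"
begin

text \<open>
  Every edge of the scheduling graph is dominated by a maximal one: the edge
  set is finite and downward closed, since switching transmissions off never
  creates a collision. A non-dominated path is rigid: replacing an entry by a
  larger matrix that still forms edges with its neighbours gives a dominating
  path, so the replacement equals the entry. Applying rigidity to the
  components of dominating maximal edges, and to meets of such components,
  yields each membership condition of \<open>\<G>\<^sub>k\<close>; the conditions on
  \<open>\<U>\<close> and \<open>\<U>'\<close> follow by induction along the path.
\<close>

lemma mle_eq_le: "mle A B \<longleftrightarrow> A \<le> B"
  by (auto simp: mle_def le_fun_def)

lemma mand_eq_inf: "mand A B = inf A B"
  by (auto simp: mand_def inf_fun_def)

lemma mless_eq_less: "mless A B \<longleftrightarrow> A < B"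
  by (auto simp: mless_def mle_eq_le less_le)

lemma seq_less_pair: "seq_less [A, B] [A', B'] \<longleftrightarrow> (A, B) < (A', B')"
proof -
  have "seq_le [A, B] [A', B'] \<longleftrightarrow> A \<le> A' \<and> B \<le> B'"
    by (auto simp: seq_le_def mle_eq_le less_Suc_eq)
  then show ?thesis
    by (auto simp: seq_less_def less_le less_eq_prod_def)
qed

lemma collision_free_subschedule:
  assumes "collision_free I D S" and "\<And>l t. S' l t \<Longrightarrow> S l t"
  shows "collision_free I D S'"
  using assms unfolding collision_free_def has_collision_def by blast

lemma ET_downward_closed:
  assumes "(A, B) \<in> ET I D T" and "A' \<le> A" and "B' \<le> B"
  shows "(A', B') \<in> ET I D T"
proof -
  obtain S where S: "collision_free I D S" "A = block S T 0" "B = block S T 1"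
    using assms(1) by (auto simp: ET_def)
  define S' where "S' = (\<lambda>l t. S l t \<and>
      (if 0 \<le> t \<and> t < int T then A' l (nat t)
       else int T \<le> t \<and> t < 2 * int T \<and> B' l (nat (t - int T))))"
  have "collision_free I D S'"
    by (rule collision_free_subschedule[OF S(1)]) (simp add: S'_def)
  moreover have "A' = block S' T 0"
    using assms(2) S(2) by (intro ext) (auto simp: block_def S'_def le_fun_def)
  moreover have "B' = block S' T 1"
    using assms(3) S(3) by (intro ext) (auto simp: block_def S'_def le_fun_def)
  ultimately show ?thesis by (auto simp: ET_def)
qed

lemma finite_ET: "finite (ET I D T :: ('l::finite mat \<times> 'l mat) set)"
proof -
  let ?M = "{A :: 'l mat. \<forall>l j. A l j \<longrightarrow> j < T}"
  have "?M \<subseteq> (\<lambda>X l j. (l, j) \<in> X) ` Pow (UNIV \<times> {..<T})"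
  proof
    fix A assume "A \<in> ?M"
    then have "A = (\<lambda>l j. (l, j) \<in> {(l, j). A l j})" "{(l, j). A l j} \<in> Pow (UNIV \<times> {..<T})"
      by auto
    then show "A \<in> (\<lambda>X l j. (l, j) \<in> X) ` Pow (UNIV \<times> {..<T})" by blast
  qed
  then have "finite ?M" by (rule finite_surj[rotated]) simp
  moreover have "ET I D T \<subseteq> ?M \<times> ?M"
    by (auto simp: ET_def block_def)
  ultimately show ?thesis by (meson finite_SigmaI finite_subset)
qed

lemma Estar_subset_ET: "Estar I D T \<subseteq> ET I D T"
  by (auto simp: Estar_def)

lemma ET_dominated_by_Estar:
  fixes A B :: "'l::finite mat"
  assumes "(A, B) \<in> ET I D T"
  obtains A' B' where "(A', B') \<in> Estar I D T" and "A \<le> A'" and "B \<le> B'"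
proof -
  obtain A' B' where m: "(A', B') \<in> ET I D T" "(A, B) \<le> (A', B')"
      "\<forall>e\<in>ET I D T. (A', B') \<le> e \<longrightarrow> (A', B') = e"
    using finite_has_maximal2[OF finite_ET assms] by (metis surj_pair)
  then have "(A', B') \<in> Estar I D T"
    by (auto simp: Estar_def seq_less_pair less_le)
  with m(2) show ?thesis using that by (auto simp: less_eq_prod_def)
qed

lemma Uprime_subset_ET: "Uprime I D T n \<subseteq> ET I D T"
proof (cases n)
  case 0
  then show ?thesis using Estar_subset_ET by simp
next
  case (Suc m)
  show ?thesis
  proof
    fix e assume "e \<in> Uprime I D T n"
    then obtain A B B' C where "e = (mand B B', C)" "(B', C) \<in> Estar I D T"
      using Suc by (auto simp: Fstar_of_def F_of_def)
    then show "e \<in> ET I D T"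
      using Estar_subset_ET ET_downward_closed[of B' C I D T "mand B B'" C]
      by (auto simp: mand_eq_inf)
  qed
qed

lemma is_path_list_update:
  assumes "is_path E k P" and "i \<le> k"
    and "0 < i \<Longrightarrow> (P ! (i - 1), X) \<in> E" and "i < k \<Longrightarrow> (X, P ! Suc i) \<in> E"
  shows "is_path E k (P[i := X])"
  using assms by (auto simp: is_path_def nth_list_update)

lemma Pstar_is_path: "P \<in> Pstar I D T k \<Longrightarrow> is_path (ET I D T) k P"
  by (simp add: Pstar_def)

lemma Pstar_entry_rigid:
  assumes P: "P \<in> Pstar I D T k" and "i \<le> k" and "P ! i \<le> X"
    and "0 < i \<Longrightarrow> (P ! (i - 1), X) \<in> ET I D T"
    and "i < k \<Longrightarrow> (X, P ! Suc i) \<in> ET I D T"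
  shows "X = P ! i"
proof (rule ccontr)
  assume ne: "X \<noteq> P ! i"
  have len: "length P = Suc k"
    using Pstar_is_path[OF P] by (simp add: is_path_def)
  have "is_path (ET I D T) k (P[i := X])"
    using is_path_list_update[OF Pstar_is_path[OF P] assms(2,4,5)] .
  moreover have "seq_less P (P[i := X])"
    using assms(2,3) ne len
    by (auto simp: seq_less_def seq_le_def mle_eq_le nth_list_update
        dest: arg_cong[where f = "\<lambda>Q. Q ! i"])
  ultimately show False using P by (auto simp: Pstar_def)
qed

lemma Pstar_edge_dominated:
  fixes P :: "'l::finite mat list"
  assumes "P \<in> Pstar I D T k" and "i < k"
  obtains A B where "(A, B) \<in> Estar I D T" and "P ! i \<le> A" and "P ! Suc i \<le> B"
  using Pstar_is_path[OF assms(1)] assms(2) ET_dominated_by_Estar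
  unfolding is_path_def by metis

lemma Pstar_Estar_endpoints:
  assumes P: "P \<in> Pstar I D T k" and "i < k"
    and AB: "(A, B) \<in> Estar I D T" "P ! i \<le> A" "P ! Suc i \<le> B"
  shows "i = 0 \<Longrightarrow> A = P ! 0" and "Suc i = k \<Longrightarrow> B = P ! k"
proof -
  have AB_ET: "(A, B) \<in> ET I D T" using AB(1) Estar_subset_ET by blast
  show "A = P ! 0" if "i = 0"
    using Pstar_entry_rigid[OF P, of 0 A] AB that assms(2)
      ET_downward_closed[OF AB_ET order_refl AB(3)] by auto
  show "B = P ! k" if "Suc i = k"
    using Pstar_entry_rigid[OF P, of k B] AB that
      ET_downward_closed[OF AB_ET AB(2) order_refl] by auto
qed

lemma Pstar_meet_rigid:
  assumes P: "P \<in> Pstar I D T k" and "Suc n < k"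
    and XY: "(X, Y) \<in> ET I D T" "P ! n \<le> X"
    and BC: "(B, C) \<in> ET I D T" "P ! Suc (Suc n) \<le> C"
    and "P ! Suc n \<le> inf Y B"
  shows "inf Y B = P ! Suc n"
proof (rule Pstar_entry_rigid[OF P])
  show "(P ! (Suc n - 1), inf Y B) \<in> ET I D T"
    using ET_downward_closed[OF XY(1)] XY(2) by simp
  show "(inf Y B, P ! Suc (Suc n)) \<in> ET I D T"
    using ET_downward_closed[OF BC(1)] BC(2) by simp
qed (use assms in auto)

lemma Pstar_first_in_Mleft_star:
  fixes P :: "'l::finite mat list"
  assumes P: "P \<in> Pstar I D T k" and "0 < k"
  shows "P ! 0 \<in> Mleft_star I D T"
proof -
  obtain A B where AB: "(A, B) \<in> Estar I D T" "P ! 0 \<le> A" "P ! Suc 0 \<le> B"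
    by (rule Pstar_edge_dominated[OF P \<open>0 < k\<close>])
  then have "A = P ! 0" by (rule Pstar_Estar_endpoints(1)[OF P \<open>0 < k\<close>]) simp
  with AB(1) show ?thesis by (auto simp: Mleft_star_def)
qed

lemma Pstar_last_in_Mright_star:
  fixes P :: "'l::finite mat list"
  assumes P: "P \<in> Pstar I D T k" and "0 < k"
  shows "P ! k \<in> Mright_star I D T"
proof -
  obtain m where m: "k = Suc m" "m < k" using \<open>0 < k\<close> gr0_implies_Suc by auto
  obtain A B where AB: "(A, B) \<in> Estar I D T" "P ! m \<le> A" "P ! Suc m \<le> B"
    by (rule Pstar_edge_dominated[OF P m(2)])
  then have "B = P ! k" by (rule Pstar_Estar_endpoints(2)[OF P m(2)]) (simp add: m(1))
  with AB(1) show ?thesis by (auto simp: Mright_star_def)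
qed

lemma Pstar_inner_in_Vset:
  fixes P :: "'l::finite mat list"
  assumes P: "P \<in> Pstar I D T k" and "0 < i" and "i < k"
  shows "P ! i \<in> Vset I D T"
proof -
  obtain n where i: "i = Suc n" using \<open>0 < i\<close> gr0_implies_Suc by blast
  with \<open>i < k\<close> have n: "n < k" "Suc n < k" by auto
  obtain A B where AB: "(A, B) \<in> Estar I D T" "P ! n \<le> A" "P ! Suc n \<le> B"
    by (rule Pstar_edge_dominated[OF P n(1)])
  obtain B' C where BC: "(B', C) \<in> Estar I D T" "P ! Suc n \<le> B'" "P ! Suc (Suc n) \<le> C"
    by (rule Pstar_edge_dominated[OF P n(2)])
  have "inf B B' = P ! Suc n"
  proof (rule Pstar_meet_rigid[OF P n(2)])
    show "(A, B) \<in> ET I D T" "(B', C) \<in> ET I D T"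
      using AB(1) BC(1) Estar_subset_ET by blast+
    show "P ! Suc n \<le> inf B B'" using AB(3) BC(2) by simp
  qed (fact AB(2) BC(3))+
  then have "P ! i = mand B B'" by (simp add: i mand_eq_inf)
  moreover have "B \<in> Mright_star I D T" "B' \<in> Mleft_star I D T"
    using AB(1) BC(1) by (auto simp: Mright_star_def Mleft_star_def)
  ultimately show ?thesis
    unfolding Vset_def by blast
qed

lemma Pstar_in_Fstar_of:
  assumes P: "P \<in> Pstar I D T k" and "Suc n < k"
    and Y: "(P ! n, Y) \<in> Uprime I D T n" "P ! Suc n \<le> Y"
    and BC: "(B, C) \<in> Estar I D T" "P ! Suc n \<le> B" "P ! Suc (Suc n) \<le> C"
  shows "(P ! n, P ! Suc n, C) \<in> Fstar_of (Estar I D T) (Uprime I D T n)"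
proof -
  let ?F = "F_of (Estar I D T) (Uprime I D T n)"
  have meet: "inf Y' B' = P ! Suc n"
    if "(P ! n, Y') \<in> Uprime I D T n" "(B', C) \<in> Estar I D T" "P ! Suc n \<le> inf Y' B'"
    for Y' B'
    using Pstar_meet_rigid[OF P \<open>Suc n < k\<close>, of "P ! n" Y' B' C] that BC(3)
      Uprime_subset_ET Estar_subset_ET by blast
  have "(P ! n, P ! Suc n, C) \<in> ?F"
    using meet[OF Y(1) BC(1)] Y BC unfolding F_of_def mand_eq_inf
    by (metis (mono_tags, lifting) le_inf_iff mem_Collect_eq)
  moreover have "\<not> (\<exists>Z. (P ! n, Z, C) \<in> ?F \<and> mless (P ! Suc n) Z)"
  proof
    assume "\<exists>Z. (P ! n, Z, C) \<in> ?F \<and> mless (P ! Suc n) Z"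
    then obtain Y' B' where "(P ! n, Y') \<in> Uprime I D T n" "(B', C) \<in> Estar I D T"
        "P ! Suc n < inf Y' B'"
      by (auto simp: F_of_def mand_eq_inf mless_eq_less)
    then have "inf Y' B' = P ! Suc n" using meet less_imp_le by blast
    with \<open>P ! Suc n < inf Y' B'\<close> show False by simp
  qed
  ultimately show ?thesis by (simp add: Fstar_of_def)
qed

lemma Pstar_edge_dominated_in_Uprime:
  fixes P :: "'l::finite mat list"
  assumes P: "P \<in> Pstar I D T k"
  shows "n < k \<Longrightarrow> \<exists>Y. P ! Suc n \<le> Y \<and> (P ! n, Y) \<in> Uprime I D T n"
proof (induction n)
  case 0
  obtain A B where AB: "(A, B) \<in> Estar I D T" "P ! 0 \<le> A" "P ! Suc 0 \<le> B"
    by (rule Pstar_edge_dominated[OF P "0.prems"])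
  then have "A = P ! 0" by (rule Pstar_Estar_endpoints(1)[OF P "0.prems"]) simp
  with AB show ?case by auto
next
  case (Suc n)
  then obtain Y where Y: "P ! Suc n \<le> Y" "(P ! n, Y) \<in> Uprime I D T n" by auto
  obtain B C where BC: "(B, C) \<in> Estar I D T" "P ! Suc n \<le> B" "P ! Suc (Suc n) \<le> C"
    by (rule Pstar_edge_dominated[OF P Suc.prems])
  have "(P ! n, P ! Suc n, C) \<in> Fstar_of (Estar I D T) (Uprime I D T n)"
    by (rule Pstar_in_Fstar_of[OF P Suc.prems Y(2,1) BC])
  then have "(P ! Suc n, C) \<in> Uprime I D T (Suc n)" by auto
  with BC(3) show ?case by blast
qed

lemma Pstar_Fstar_of_at:
  fixes P :: "'l::finite mat list"
  assumes P: "P \<in> Pstar I D T k" and "Suc n < k"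
  obtains C where "(P ! n, P ! Suc n, C) \<in> Fstar_of (Estar I D T) (Uprime I D T n)"
    and "Suc (Suc n) = k \<Longrightarrow> C = P ! k"
proof -
  obtain Y where Y: "P ! Suc n \<le> Y" "(P ! n, Y) \<in> Uprime I D T n"
    using Pstar_edge_dominated_in_Uprime[OF P] \<open>Suc n < k\<close> by (meson Suc_lessD)
  obtain B C where BC: "(B, C) \<in> Estar I D T" "P ! Suc n \<le> B" "P ! Suc (Suc n) \<le> C"
    by (rule Pstar_edge_dominated[OF P \<open>Suc n < k\<close>])
  show ?thesis
  proof
    show "(P ! n, P ! Suc n, C) \<in> Fstar_of (Estar I D T) (Uprime I D T n)"
      by (rule Pstar_in_Fstar_of[OF P \<open>Suc n < k\<close> Y(2,1) BC])
    show "C = P ! k" if "Suc (Suc n) = k"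
      using Pstar_Estar_endpoints(2)[OF P \<open>Suc n < k\<close> BC] that by simp
  qed
qed

lemma Pstar_edge_in_Uset:
  fixes P :: "'l::finite mat list"
  assumes "P \<in> Pstar I D T k" and "Suc i < k"
  shows "(P ! i, P ! Suc i) \<in> Uset I D T i"
proof -
  obtain C where "(P ! i, P ! Suc i, C) \<in> Fstar_of (Estar I D T) (Uprime I D T i)"
    by (rule Pstar_Fstar_of_at[OF assms])
  then show ?thesis by (auto simp: Uset_def)
qed

lemma Pstar_last_edge_in_Uprime:
  fixes P :: "'l::finite mat list"
  assumes P: "P \<in> Pstar I D T k" and "0 < k"
  shows "(P ! (k - 1), P ! k) \<in> Uprime I D T (k - 1)"
proof (cases "k = 1")
  case True
  obtain A B where AB: "(A, B) \<in> Estar I D T" "P ! 0 \<le> A" "P ! Suc 0 \<le> B"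
    by (rule Pstar_edge_dominated[OF P \<open>0 < k\<close>])
  then have "A = P ! 0" "B = P ! k"
    using Pstar_Estar_endpoints[OF P \<open>0 < k\<close> AB] True by simp_all
  with AB(1) True show ?thesis by simp
next
  case False
  then obtain n where n: "k = Suc (Suc n)" using \<open>0 < k\<close> by (metis One_nat_def gr0_implies_Suc not0_implies_Suc)
  then have "Suc n < k" by simp
  obtain C where "(P ! n, P ! Suc n, C) \<in> Fstar_of (Estar I D T) (Uprime I D T n)" "C = P ! k"
    by (rule Pstar_Fstar_of_at[OF P \<open>Suc n < k\<close>]) (use n in simp)
  with n show ?thesis by auto
qed

theorem lemma7:
  fixes I :: "'l::finite \<Rightarrow> 'l set set" and D :: "'l \<Rightarrow> 'l \<Rightarrow> int" and T k :: nat
  assumes "network I" and "T \<ge> 1" and "k \<ge> 1"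
      and "P \<in> Pstar I D T k"
  shows "path_Gk I D T k P"
proof -
  note P = \<open>P \<in> Pstar I D T k\<close>
  have k: "0 < k" using \<open>k \<ge> 1\<close> by simp
  have "length P = Suc k"
    using Pstar_is_path[OF P] by (simp add: is_path_def)
  moreover have "(P ! (k - 1), P ! k) \<in> Uprime I D T (k - 1)"
    using Pstar_last_edge_in_Uprime[OF P k] .
  moreover have "k \<noteq> 1 \<Longrightarrow> 2 \<le> k" using k by simp
  moreover have "\<And>i. 1 \<le> i \<Longrightarrow> i \<le> k - 1 \<Longrightarrow> P ! i \<in> Vset I D T"
    using Pstar_inner_in_Vset[OF P] k by simp
  moreover have "\<And>i. k \<noteq> 1 \<Longrightarrow> i \<le> k - 2 \<Longrightarrow> (P ! i, P ! Suc i) \<in> Uset I D T i"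
    using Pstar_edge_in_Uset[OF P] k by simp
  ultimately show ?thesis
    using Pstar_first_in_Mleft_star[OF P k] Pstar_last_in_Mright_star[OF P k]
    by (auto simp: path_Gk_def)
qed

end
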